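(* Let $T$ be a binary tree rooted at $O$. Consider the stochastic search game on $T$ in which every edge has activation probability $p$. There exists $p_0\in(0,1)$ (depending on $T$) such that for all $p\in[p_0,1]$ the following hold. - For every leaf edge $e$, the expected time for the biased depth-first strategy $\sigma_\alpha$ to traverse $e$ is $\frac12\tau(O)+\Lambda(O)$. - Consequently, $\mathrm{val}(p)\le \frac12\tau(O)+\Lambda(O)$.
   Context: Setting: the stochastic search game on a finite tree $T$ rooted at $O$. Every edge has length $1$ and is active at each stage independently with the same probability $p\in(0,1]$. The hider picks an edge and stays there. The searcher, starting at $O$ and observing which edges are currently active, at each stage either waits or traverses an active edge incident to her position. The hider's payoff is the expected first time the searcher traverses his edge. $\mathrm{val}(p)$ is the value. Orient the edges away from $O$. For a vertex $v$, $T_v$ is the subtree rooted at $v$ consisting of all edges below $v$. For an edge $e=(u,w)$, $T_e$ is $\{e\}\cup T_w$, rooted at $u$. A leaf edge is an edge whose head has no outgoing edge. $T$ is binary if every vertex has at most two outgoing edges. A depth-first strategy (DFS) acts as follows at the searcher's current vertex: - if some untraversed outgoing edge is active, traverse one of them (possibly chosen at random); - if all untraversed outgoing edges are inactive, wait; - if all outgoing edges have been traversed, traverse the edge back toward $O$ if it is active, and wait otherwise. Cycle time: for a vertex or edge $z$, $\tau(z)$ is the expected time for a DFS on $T_z$, started at its root, to traverse every edge of $T_z$ and return to the root. It does not depend on the DFS. Equivalently, for binary trees: - $\tau(v)=0$ if $v$ has no outgoing edge; - $\tau(e)=\tau(w)+2/p$ for $e=(u,w)$; - $\tau(v)=\tau(e)$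 if $v$ has exactly one outgoing edge $e$; - $\tau(v)=\tau(w_1)+\tau(w_2)+3/p+1/(1-(1-p)^2)$ if $v$ has outgoing edges to $w_1,w_2$. The function $\Lambda$ is defined recursively on rooted binary trees. Write $\Lambda(v)=\Lambda(T_v)$ and $\Lambda(e)=\Lambda(T_e)$. - $\Lambda(v)=0$ if $v$ has no outgoing edge. - If the root $r$ has a single outgoing edge $e=(r,w)$, then $\Lambda(r)=\Lambda(e)=\Lambda(w)$. - If $r$ has two outgoing edges $e_1=(r,w_1)$ and $e_2=(r,w_2)$, then $$\Lambda(r)=\frac{\tau(e_1)}{\tau(e_1)+\tau(e_2)}\Lambda(w_1)+\frac{\tau(e_2)}{\tau(e_1)+\tau(e_2)}\Lambda(w_2)+\frac12\Big(\frac1{1-(1-p)^2}-\frac1p\Big).$$ The biased depth-first strategy $\sigma_\alpha$ is the DFS that, at a vertex whose two outgoing edges $e_1,e_2$ are both untraversed and both active, takes $e_1$ with probability $\alpha(e_1)$ and $e_2$ with probability $\alpha(e_2)=1-\alpha(e_1)$, where $$\alpha(e_1)=\mathrm{proj}_{[0,1]}\Big(\frac12+\frac{\Lambda(e_1)-\Lambda(e_2)}{\tau(e_1)+\tau(e_2)}\cdot\frac{1-(1-p)^2}{p^2}\Big).$$ *)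

theory Defs
  imports "HOL-Probability.Probability"
begin

text \<open>A finite rooted binary tree. Each child link is an edge of length 1.
  Leaf: no outgoing edge; Node1 t: exactly one outgoing edge; Node2 l r: two.\<close>
datatype btree = Leaf | Node1 btree | Node2 btree btree

text \<open>Vertices are addressed by paths from the root O = []; the children of
  vertex v are v @ [b]. An edge is identified by its head vertex w (w \<noteq> []),
  i.e. the edge (butlast w, w).\<close>
fun verts :: "btree \<Rightarrow> bool list set" where
  "verts Leaf = {[]}"
| "verts (Node1 t) = {[]} \<union> Cons False ` verts t"
| "verts (Node2 l r) = {[]} \<union> Cons False ` verts l \<union> Cons True ` verts r"

definition edges :: "btree \<Rightarrow> bool list set" where
  "edges t = verts t - {[]}"

fun sub :: "btree \<Rightarrow> bool list \<Rightarrow> btree" where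
  "sub t [] = t"
| "sub (Node1 t) (False # v) = sub t v"
| "sub (Node2 l r) (False # v) = sub l v"
| "sub (Node2 l r) (True # v) = sub r v"
| "sub _ _ = Leaf"

definition leaf_edge :: "btree \<Rightarrow> bool list \<Rightarrow> bool" where
  "leaf_edge t e \<longleftrightarrow> e \<in> edges t \<and> e @ [False] \<notin> verts t \<and> e @ [True] \<notin> verts t"

text \<open>tauT p T = tau of the root of T.  tau(e) for e=(u,w) is tauT p (T_w) + 2/p.\<close>
primrec tauT :: "real \<Rightarrow> btree \<Rightarrow> real" where
  "tauT p Leaf = 0"
| "tauT p (Node1 t) = (tauT p t + 2/p)"
| "tauT p (Node2 l r) = tauT p l + tauT p r + 3/p + 1/(1-(1-p)^2)"

primrec LamT :: "real \<Rightarrow> btree \<Rightarrow> real" where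
  "LamT p Leaf = 0"
| "LamT p (Node1 t) = LamT p t"
| "LamT p (Node2 l r) =
     (let te1 = tauT p l + 2/p; te2 = tauT p r + 2/p in
       te1/(te1+te2) * LamT p l + te2/(te1+te2) * LamT p r
       + 1/2 * (1/(1-(1-p)^2) - 1/p))"

definition alpha_at :: "btree \<Rightarrow> real \<Rightarrow> bool list \<Rightarrow> real" where
  "alpha_at t p v = (case sub t v of
      Node2 l r \<Rightarrow>
        (let te1 = tauT p l + 2/p; te2 = tauT p r + 2/p in
          max 0 (min 1 (1/2 + (LamT p l - LamT p r)/(te1+te2) * ((1-(1-p)^2)/p^2))))
    | _ \<Rightarrow> 1)"

definition config :: "btree \<Rightarrow> real \<Rightarrow> bool list set pmf" where
  "config t p = map_pmf (\<lambda>f. {e. f e}) (Pi_pmf (edges t) False (\<lambda>_. bernoulli_pmf p))"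

text \<open>A history: for each elapsed stage, the observed active set and the searcher's
  resulting position.\<close>
type_synonym hist = "(bool list set \<times> bool list) list"

text \<open>A (behavioural, possibly randomised) searcher strategy: given the history and
  the currently active edges, a distribution over the proposed next position
  (proposing the current position = waiting).\<close>
type_synonym strategy = "hist \<Rightarrow> bool list set \<Rightarrow> bool list pmf"

definition pos :: "hist \<Rightarrow> bool list" where
  "pos h = (if h = [] then [] else snd (last h))"

definition move :: "btree \<Rightarrow> bool list set \<Rightarrow> bool list \<Rightarrow> bool list \<Rightarrow> bool list" where
  "move t A v x =
     (if (x \<in> verts t \<and> (\<exists>b. x = v @ [b]) \<and> x \<in> A) \<or> (v \<noteq> [] \<and> x = butlast v \<and> v \<in> A)
      then x else v)"

fun hist_pmf :: "btree \<Rightarrow> real \<Rightarrow> strategy \<Rightarrow> nat \<Rightarrow> hist pmf" where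
  "hist_pmf t p \<sigma> 0 = return_pmf []"
| "hist_pmf t p \<sigma> (Suc n) =
     bind_pmf (hist_pmf t p \<sigma> n) (\<lambda>h.
     bind_pmf (config t p) (\<lambda>A.
     map_pmf (\<lambda>x. h @ [(A, move t A (pos h) x)]) (\<sigma> h A)))"

definition positions :: "hist \<Rightarrow> bool list list" where
  "positions h = [] # map snd h"

definition traversed :: "hist \<Rightarrow> bool list set" where
  "traversed h = {e. e \<noteq> [] \<and> (\<exists>i < length h.
      (positions h ! i, positions h ! Suc i) \<in> {(butlast e, e), (e, butlast e)})}"

text \<open>Expected first time at which the searcher traverses edge e:
  E[T] = sum over n of P(T > n).\<close>
definition ET :: "btree \<Rightarrow> real \<Rightarrow> strategy \<Rightarrow> bool list \<Rightarrow> ennreal" where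
  "ET t p \<sigma> e = (\<Sum>n. ennreal (measure_pmf.prob (hist_pmf t p \<sigma> n) {h. e \<notin> traversed h}))"

definition val :: "btree \<Rightarrow> real \<Rightarrow> ennreal" where
  "val t p = (INF \<sigma> :: strategy. SUP e \<in> edges t. ET t p \<sigma> e)"

definition sigma_alpha :: "btree \<Rightarrow> real \<Rightarrow> strategy" where
  "sigma_alpha t p h A =
     (let v = pos h;
          C = {c \<in> verts t. (\<exists>b. c = v @ [b]) \<and> c \<notin> traversed h}
      in if v @ [False] \<in> C \<inter> A \<and> v @ [True] \<in> C \<inter> A then
           map_pmf (\<lambda>b. if b then v @ [False] else v @ [True]) (bernoulli_pmf (alpha_at t p v))
         else if C \<inter> A \<noteq> {} then return_pmf (THE c. c \<in> C \<inter> A)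
         else if C \<noteq> {} then return_pmf v
         else if v \<noteq> [] \<and> v \<in> A then return_pmf (butlast v)
         else return_pmf v)"

end

theory Submission
  imports Defs "HOL-Library.Sublist"
begin

text \<open>Fix a leaf edge e. To a reachable state of the biased depth-first search -- the current
  vertex v and the set S of traversed edges -- attach the expected remaining time K(v, S) until e
  is traversed: each vertex off the path to e must first finish its pending subtrees (costing
  their cycle times) and wait for the edge back up, while a fresh vertex x on the path costs
  \<open>\<tau>(T\<^sub>x)/2 + \<Lambda>(T\<^sub>x)\<close>. For p close to 1 the bias \<open>\<alpha>\<close> is not clipped, and this value of
  \<open>\<alpha>\<close> is precisely what makes K decrease by 1 in expectation at every stage before e is
  traversed. As K is bounded and \<open>K(O, \<emptyset>) = \<tau>(O)/2 + \<Lambda>(O)\<close>, telescoping gives the expected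
  hitting time of e. Every edge lies on the path to some leaf edge and is traversed before it,
  which bounds the value.\<close>

section \<open>Trees\<close>

lemma Nil_in_verts [simp]: "[] \<in> verts t"
  by (cases t) auto

lemma finite_verts [simp]: "finite (verts t)"
  by (induction t) auto

lemma finite_edges [simp]: "finite (edges t)"
  by (simp add: edges_def)

lemma append_in_verts_iff: "v \<in> verts t \<Longrightarrow> v @ w \<in> verts t \<longleftrightarrow> w \<in> verts (sub t v)"
  by (induction t arbitrary: v; case_tac v) auto

lemma prefix_in_verts: "v @ w \<in> verts t \<Longrightarrow> v \<in> verts t"
  by (induction t arbitrary: v; case_tac v) auto

lemma sub_append: "v \<in> verts t \<Longrightarrow> sub t (v @ w) = sub (sub t v) w"
  by (induction t arbitrary: v; case_tac v) auto

lemma snoc_in_verts_iff: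
  "v \<in> verts t \<Longrightarrow>
     v @ [b] \<in> verts t \<longleftrightarrow> (case sub t v of Leaf \<Rightarrow> False | Node1 _ \<Rightarrow> \<not> b | Node2 _ _ \<Rightarrow> True)"
  using append_in_verts_iff[of v t "[b]"] by (cases "sub t v") auto

lemma size_sub_le: "size (sub t v) \<le> size t"
  by (induction t v rule: sub.induct) auto

lemma leaf_edgeD:
  assumes "leaf_edge t e"
  shows "e \<in> edges t" "e \<noteq> []" "e \<in> verts t" "sub t e = Leaf"
proof -
  show e: "e \<in> edges t" "e \<noteq> []" "e \<in> verts t"
    using assms unfolding leaf_edge_def edges_def by auto
  show "sub t e = Leaf"
    using assms snoc_in_verts_iff[OF e(3), of False] snoc_in_verts_iff[OF e(3), of True]
    unfolding leaf_edge_def by (cases "sub t e") auto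
qed

lemma ex_leaf_edge_extending:
  assumes "e' \<in> edges t"
  shows "\<exists>e. leaf_edge t e \<and> prefix e' e"
proof -
  define Y where "Y = {y \<in> edges t. prefix e' y}"
  have "finite Y" "e' \<in> Y"
    using assms unfolding Y_def by auto
  then have "Max (length ` Y) \<in> length ` Y"
    by (intro Max_in) auto
  then obtain y where y: "y \<in> Y" "length y = Max (length ` Y)"
    by auto
  have "y @ [b] \<notin> verts t" for b
  proof
    assume "y @ [b] \<in> verts t"
    then have "y @ [b] \<in> Y"
      using y(1) unfolding Y_def edges_def by (auto simp: prefix_def)
    then show False
      using y(2) \<open>finite Y\<close> by (metis Max_ge finite_imageI image_eqI length_append_singleton not_less_eq_eq order_refl)
  qed
  then show ?thesis
    using y(1) unfolding Y_def leaf_edge_def by blast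
qed

section \<open>Cycle times and the function \<open>\<Lambda>\<close>\<close>

lemma one_minus_sq_pos:
  fixes p :: real
  assumes "0 < p" "p \<le> 1"
  shows "0 < 1 - (1-p)^2"
proof -
  have "1 - (1-p)^2 = p * (2-p)"
    by (simp add: power2_eq_square algebra_simps)
  then show ?thesis
    using assms by simp
qed

lemma tauT_nonneg: "0 < p \<Longrightarrow> p \<le> 1 \<Longrightarrow> 0 \<le> tauT p s"
  using one_minus_sq_pos[of p] by (induction s) auto

lemma convex_comb_eq:
  fixes a b x y :: real
  assumes "a + b \<noteq> 0"
  shows "a/(a+b) * x + b/(a+b) * y = x - b * ((x-y)/(a+b))"
    and "a/(a+b) * x + b/(a+b) * y = y + a * ((x-y)/(a+b))"
  using assms by (simp_all add: divide_simps; simp add: algebra_simps)+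

lemma abs_convex_comb_le:
  fixes a b x y M :: real
  assumes "0 < a" "0 < b" "\<bar>x\<bar> \<le> M" "\<bar>y\<bar> \<le> M"
  shows "\<bar>a/(a+b) * x + b/(a+b) * y\<bar> \<le> M"
proof -
  have "\<bar>a/(a+b) * x + b/(a+b) * y\<bar> \<le> a/(a+b) * \<bar>x\<bar> + b/(a+b) * \<bar>y\<bar>"
    using assms(1,2) by (simp add: abs_mult order_trans[OF abs_triangle_ineq])
  also have "\<dots> \<le> a/(a+b) * M + b/(a+b) * M"
    using assms by (intro add_mono mult_left_mono) auto
  also have "\<dots> = M"
    using convex_comb_eq(1)[of a b M M] assms(1,2) by simp
  finally show ?thesis .
qed

lemma abs_LamT_le:
  assumes "0 < p" "p \<le> 1"
  shows "\<bar>LamT p s\<bar> \<le> size s * ((1-p) / (2 * (1 - (1-p)^2)))"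
proof -
  define q where "q = 1 - (1-p)^2"
  define c where "c = (1-p) / (2*q)"
  have q: "0 < q" "q = p * (2-p)"
    using one_minus_sq_pos[OF assms] unfolding q_def by (simp_all add: power2_eq_square algebra_simps)
  have "0 \<le> c"
    using q assms by (simp add: c_def)
  have correction: "1/2 * (1/q - 1/p) = - c"
    using q assms unfolding c_def q(2) by (simp add: field_simps)
  have "\<bar>LamT p s\<bar> \<le> size s * c"
  proof (induction s)
    case Leaf
    then show ?case by simp
  next
    case (Node1 s)
    then show ?case
      using \<open>0 \<le> c\<close> by (simp add: distrib_right)
  next
    case (Node2 l r)
    have pos: "0 < tauT p l + 2/p" "0 < tauT p r + 2/p"
      using tauT_nonneg[OF assms] assms by (simp_all add: add_nonneg_pos)
    have "real (size l) * c \<le> real (size l + size r) * c" "real (size r) * c \<le> real (size l + size r) * c"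
      using \<open>0 \<le> c\<close> by (intro mult_right_mono; simp)+
    then have bound: "\<bar>LamT p l\<bar> \<le> real (size l + size r) * c" "\<bar>LamT p r\<bar> \<le> real (size l + size r) * c"
      using Node2 by linarith+
    define W where "W = (tauT p l + 2/p) / ((tauT p l + 2/p) + (tauT p r + 2/p)) * LamT p l
      + (tauT p r + 2/p) / ((tauT p l + 2/p) + (tauT p r + 2/p)) * LamT p r"
    have "\<bar>W\<bar> \<le> real (size l + size r) * c"
      unfolding W_def by (rule abs_convex_comb_le[OF pos bound])
    then have "\<bar>W - c\<bar> \<le> real (size l + size r) * c + c"
      using abs_triangle_ineq4[of W c] abs_of_nonneg[OF \<open>0 \<le> c\<close>] by linarith
    moreover have "LamT p (Node2 l r) = W - c"
      unfolding LamT.simps Let_def correction[unfolded q_def] W_def by (simp only: diff_conv_add_uminus)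
    moreover have "real (size (Node2 l r)) * c = real (size l + size r) * c + c"
      by (simp add: algebra_simps)
    ultimately show ?case
      by simp
  qed
  then show ?thesis
    unfolding c_def q_def .
qed

text \<open>The recursion for \<open>\<Lambda>\<close> rewritten around either child; d is the quantity that determines
  the unclipped bias, \<open>\<alpha>(e\<^sub>1) = 1/2 + d (1 - (1-p)\<^sup>2) / p\<^sup>2\<close>.\<close>

lemma half_tauT_plus_LamT_Node2:
  fixes l r :: btree
  assumes "0 < p" "p \<le> 1"
  defines "t1 \<equiv> tauT p l + 2/p" and "t2 \<equiv> tauT p r + 2/p"
    and "d \<equiv> (LamT p l - LamT p r) / ((tauT p l + 2/p) + (tauT p r + 2/p))" and "q \<equiv> 1 - (1-p)^2"
  shows "tauT p (Node2 l r) / 2 + LamT p (Node2 l r) = tauT p l / 2 + LamT p l + t2 * (1/2 - d) + 1/q"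
    and "tauT p (Node2 l r) / 2 + LamT p (Node2 l r) = tauT p r / 2 + LamT p r + t1 * (1/2 + d) + 1/q"
proof -
  have "0 < t1 + t2"
    using tauT_nonneg[OF assms(1,2)] assms(1) unfolding t1_def t2_def by (simp add: add_pos_nonneg)
  moreover have "d = (LamT p l - LamT p r) / (t1 + t2)"
    unfolding d_def t1_def t2_def ..
  ultimately have comb: "t1/(t1+t2) * LamT p l + t2/(t1+t2) * LamT p r = LamT p l - t2 * d"
    "t1/(t1+t2) * LamT p l + t2/(t1+t2) * LamT p r = LamT p r + t1 * d"
    using convex_comb_eq[of t1 t2] by simp_all
  have "p \<noteq> 0" "q \<noteq> 0"
    using one_minus_sq_pos[OF assms(1,2)] assms(1) unfolding q_def by auto
  have L: "LamT p (Node2 l r) = (t1/(t1+t2) * LamT p l + t2/(t1+t2) * LamT p r) + 1/2 * (1/q - 1/p)"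
    by (simp add: Let_def t1_def t2_def q_def)
  have T: "tauT p (Node2 l r) = t1 + t2 - 1/p + 1/q"
    using \<open>p \<noteq> 0\<close> by (simp add: t1_def t2_def q_def field_simps)
  have lr: "tauT p l = t1 - 2/p" "tauT p r = t2 - 2/p"
    by (simp_all add: t1_def t2_def)
  show "tauT p (Node2 l r) / 2 + LamT p (Node2 l r) = tauT p l / 2 + LamT p l + t2 * (1/2 - d) + 1/q"
    using \<open>p \<noteq> 0\<close> \<open>q \<noteq> 0\<close> unfolding L T comb(1) lr by (simp add: field_simps)
  show "tauT p (Node2 l r) / 2 + LamT p (Node2 l r) = tauT p r / 2 + LamT p r + t1 * (1/2 + d) + 1/q"
    using \<open>p \<noteq> 0\<close> \<open>q \<noteq> 0\<close> unfolding L T comb(2) lr by (simp add: field_simps)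
qed

text \<open>Since \<open>|\<Lambda>| \<le> size \<cdot> (1-p) / (2 (1 - (1-p)\<^sup>2))\<close> and \<open>\<tau>(e\<^sub>1) + \<tau>(e\<^sub>2) \<ge> 4\<close>, above this threshold
  the argument of the projection in the bias stays within [0, 1].\<close>

definition p_threshold :: "btree \<Rightarrow> real" where
  "p_threshold t = 1 - 1 / (4 * (real (size t) + 1))"

lemma p_threshold_ge: "3/4 \<le> p_threshold t"
  unfolding p_threshold_def by (simp add: field_simps)

lemma p_threshold_less_one: "p_threshold t < 1"
  unfolding p_threshold_def by simp

lemma p_threshold_bound:
  assumes p: "p_threshold t \<le> p" "p \<le> 1"
  shows "real (size t) * (1-p) / (8 * p^2) \<le> 1/2"
proof -
  define n where "n = real (size t)"
  have "3/4 \<le> p"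
    using p p_threshold_ge[of t] by linarith
  then have "n * (1-p) / (8 * p^2) \<le> n * (1-p) / (8 * (3/4)^2)"
    using p(2) by (intro divide_left_mono) (auto simp: n_def intro!: power_mono)
  also have "\<dots> \<le> 1/2"
  proof -
    have "1 - p \<le> 1 / (4 * (n+1))"
      using p(1) unfolding p_threshold_def n_def by linarith
    then have "n * (1-p) \<le> n * (1 / (4 * (n+1)))"
      by (rule mult_left_mono) (simp add: n_def)
    also have "\<dots> \<le> 1/2"
      by (simp add: n_def field_simps)
    finally show ?thesis
      by (simp add: power2_eq_square)
  qed
  finally show ?thesis
    unfolding n_def .
qed

lemma alpha_at_unclipped:
  assumes p: "p_threshold t \<le> p" "p \<le> 1" and v: "sub t v = Node2 l r"
  shows "alpha_at t p v = 1/2 + (LamT p l - LamT p r) / ((tauT p l + 2/p) + (tauT p r + 2/p))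
                               * ((1 - (1-p)^2) / p^2)"
proof -
  have p0: "0 < p"
    using p p_threshold_ge[of t] by linarith
  define n where "n = real (size t)"
  define q where "q = 1 - (1-p)^2"
  define c where "c = (1-p) / (2*q)"
  define S where "S = (tauT p l + 2/p) + (tauT p r + 2/p)"
  define X where "X = (LamT p l - LamT p r) / S * (q / p^2)"
  have q: "0 < q"
    unfolding q_def using one_minus_sq_pos[OF p0 p(2)] .
  have "0 \<le> c"
    using q p by (simp add: c_def)
  have "size l + size r \<le> size t"
    using size_sub_le[of t v] v by simp
  then have "real (size l) * c + real (size r) * c \<le> n * c"
    using \<open>0 \<le> c\<close> unfolding n_def by (simp add: distrib_right[symmetric] mult_right_mono)
  then have d: "\<bar>LamT p l - LamT p r\<bar> \<le> n * c"
    using abs_LamT_le[OF p0 p(2), of l] abs_LamT_le[OF p0 p(2), of r] unfolding c_def q_def by linarith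
  have "4/p \<le> S" "4 \<le> 4/p"
    using tauT_nonneg[OF p0 p(2), of l] tauT_nonneg[OF p0 p(2), of r] p0 p(2)
    unfolding S_def by (simp_all add: field_simps)
  then have S: "4 \<le> S" by linarith
  have "\<bar>X\<bar> = \<bar>LamT p l - LamT p r\<bar> * (q / p^2) / S"
    unfolding X_def using S q p0 by (simp add: abs_mult abs_divide)
  also have "\<dots> \<le> n * c * (q / p^2) / 4"
  proof (rule frac_le)
    show "0 \<le> n * c * (q / p^2)"
      using \<open>0 \<le> c\<close> q by (simp add: n_def)
    show "\<bar>LamT p l - LamT p r\<bar> * (q / p^2) \<le> n * c * (q / p^2)"
      using q by (intro mult_right_mono[OF d]) simp
  qed (use S in auto)
  also have "\<dots> = n * (1-p) / (8 * p^2)"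
    unfolding c_def using q p0 by (simp add: field_simps)
  also have "\<dots> \<le> 1/2"
    using p_threshold_bound[OF p] unfolding n_def .
  finally have "max 0 (min 1 (1/2 + X)) = 1/2 + X"
    by simp
  then show ?thesis
    using v unfolding alpha_at_def X_def S_def q_def by (simp add: Let_def)
qed

lemma alpha_at_range: "0 \<le> alpha_at t p v" "alpha_at t p v \<le> 1"
  unfolding alpha_at_def by (auto split: btree.splits simp: Let_def)

section \<open>Histories and moves\<close>

lemma butlast_eq_self_iff [simp]: "butlast xs = xs \<longleftrightarrow> xs = []"
  by (cases xs rule: rev_cases) auto

lemma self_eq_butlast_iff [simp]: "xs = butlast xs \<longleftrightarrow> xs = []"
  by (cases xs rule: rev_cases) auto

lemma butlast_butlast_neq_self [simp]: "xs \<noteq> [] \<Longrightarrow> butlast (butlast xs) \<noteq> xs"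
  by (cases xs rule: rev_cases) (auto dest: arg_cong[of _ _ length])

definition crossed :: "bool list \<Rightarrow> bool list \<Rightarrow> bool list set" where
  "crossed v y = {e. e \<noteq> [] \<and> (v, y) \<in> {(butlast e, e), (e, butlast e)}}"

lemma crossed_snoc [simp]: "crossed v (v @ [b]) = {v @ [b]}"
  unfolding crossed_def by (auto dest: arg_cong[of _ _ length])

lemma crossed_butlast: "v \<noteq> [] \<Longrightarrow> crossed v (butlast v) = {v}"
  unfolding crossed_def by (auto dest: arg_cong[of _ _ length])

lemma crossed_self [simp]: "crossed v v = {}"
  unfolding crossed_def by (auto dest: arg_cong[of _ _ length])

lemma pos_Nil [simp]: "pos [] = []"
  by (simp add: pos_def)

lemma pos_snoc [simp]: "pos (h @ [x]) = snd x"
  by (simp add: pos_def)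

lemma nth_positions_length: "positions h ! length h = pos h"
  by (cases h rule: rev_cases) (auto simp: positions_def pos_def nth_append)

lemma traversed_Nil [simp]: "traversed [] = {}"
  by (simp add: traversed_def)

lemma traversed_snoc: "traversed (h @ [(A, y)]) = traversed h \<union> crossed (pos h) y"
proof -
  let ?P = "positions (h @ [(A, y)])"
  have old: "?P ! i = positions h ! i" if "i \<le> length h" for i
    using that by (cases i) (auto simp: positions_def nth_append)
  have new: "?P ! Suc (length h) = y"
    by (simp add: positions_def nth_append)
  have key: "(\<exists>i < length (h @ [(A, y)]). (?P ! i, ?P ! Suc i) \<in> X)
      \<longleftrightarrow> (\<exists>i < length h. (positions h ! i, positions h ! Suc i) \<in> X) \<or> (pos h, y) \<in> X" for X
    using old new nth_positions_length[of h] by (auto simp: less_Suc_eq)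
  show ?thesis
    unfolding traversed_def crossed_def key by blast
qed

lemma move_snoc: "v @ [b] \<in> verts t \<Longrightarrow> v @ [b] \<in> A \<Longrightarrow> move t A v (v @ [b]) = v @ [b]"
  unfolding move_def by auto

lemma move_butlast: "v \<noteq> [] \<Longrightarrow> v \<in> A \<Longrightarrow> move t A v (butlast v) = butlast v"
  unfolding move_def by auto

lemma move_self [simp]: "move t A v v = v"
  unfolding move_def by auto

definition sigma_state :: "btree \<Rightarrow> real \<Rightarrow> bool list \<Rightarrow> bool list set \<Rightarrow> bool list set \<Rightarrow> bool list pmf" where
  "sigma_state t p v S A =
    (let c0 = v @ [False]; c1 = v @ [True];
         u0 = (c0 \<in> verts t \<and> c0 \<notin> S); u1 = (c1 \<in> verts t \<and> c1 \<notin> S)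
     in if u0 \<and> u1 \<and> c0 \<in> A \<and> c1 \<in> A then
          map_pmf (\<lambda>b. if b then c0 else c1) (bernoulli_pmf (alpha_at t p v))
        else if u0 \<and> c0 \<in> A then return_pmf c0
        else if u1 \<and> c1 \<in> A then return_pmf c1
        else if u0 \<or> u1 then return_pmf v
        else if v \<noteq> [] \<and> v \<in> A then return_pmf (butlast v)
        else return_pmf v)"

lemma sigma_alpha_eq_sigma_state: "sigma_alpha t p h A = sigma_state t p (pos h) (traversed h) A"
proof -
  define v where "v = pos h"
  define S where "S = traversed h"
  define u0 where "u0 = (v @ [False] \<in> verts t \<and> v @ [False] \<notin> S)"
  define u1 where "u1 = (v @ [True] \<in> verts t \<and> v @ [True] \<notin> S)"
  have "(\<exists>b. c = v @ [b]) \<longleftrightarrow> c = v @ [False] \<or> c = v @ [True]" for c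
    by (metis (full_types))
  then have C: "{c \<in> verts t. (\<exists>b. c = v @ [b]) \<and> c \<notin> S} = {x. (x = v @ [False] \<and> u0) \<or> (x = v @ [True] \<and> u1)}"
    unfolding u0_def u1_def by auto
  then have CA: "{c \<in> verts t. (\<exists>b. c = v @ [b]) \<and> c \<notin> S} \<inter> A
      = {x. (x = v @ [False] \<and> u0 \<and> v @ [False] \<in> A) \<or> (x = v @ [True] \<and> u1 \<and> v @ [True] \<in> A)}"
    by auto
  show ?thesis
    unfolding sigma_alpha_def sigma_state_def Let_def v_def[symmetric] S_def[symmetric] CA
      u0_def[symmetric] u1_def[symmetric]
    unfolding C by (cases u0; cases u1; cases "v @ [False] \<in> A"; cases "v @ [True] \<in> A") (simp_all add: ex_disj_distrib)
qed

lemma set_pmf_sigma_state: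
  assumes "x \<in> set_pmf (sigma_state t p v S A)"
  shows "(x = v @ [False] \<and> v @ [False] \<in> verts t \<and> v @ [False] \<notin> S \<and> v @ [False] \<in> A)
       \<or> (x = v @ [True] \<and> v @ [True] \<in> verts t \<and> v @ [True] \<notin> S \<and> v @ [True] \<in> A)
       \<or> x = v
       \<or> (x = butlast v \<and> \<not> (v @ [False] \<in> verts t \<and> v @ [False] \<notin> S)
            \<and> \<not> (v @ [True] \<in> verts t \<and> v @ [True] \<notin> S) \<and> v \<noteq> [] \<and> v \<in> A)"
  using assms unfolding sigma_state_def Let_def by (auto split: if_splits)

section \<open>Active edges\<close>

lemma map_config_member:
  assumes "x \<in> edges t"
  shows "map_pmf (\<lambda>A. x \<in> A) (config t p) = bernoulli_pmf p"
  using assms Pi_pmf_component[of "edges t" x False "\<lambda>_. bernoulli_pmf p"]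
  unfolding config_def pmf.map_comp o_def by simp

lemma map_config_members:
  assumes "x \<in> edges t" "y \<in> edges t" "x \<noteq> y"
  shows "map_pmf (\<lambda>A. (x \<in> A, y \<in> A)) (config t p) = pair_pmf (bernoulli_pmf p) (bernoulli_pmf p)"
proof -
  let ?Q = "Pi_pmf (edges t - {x}) False (\<lambda>_. bernoulli_pmf p)"
  have E: "edges t = insert x (edges t - {x})"
    using assms by auto
  have "map_pmf (\<lambda>A. (x \<in> A, y \<in> A)) (config t p)
      = map_pmf (\<lambda>f. (f x, f y)) (Pi_pmf (edges t) False (\<lambda>_. bernoulli_pmf p))"
    unfolding config_def pmf.map_comp o_def by simp
  also have "\<dots> = map_pmf (\<lambda>f. (f x, f y)) (map_pmf (\<lambda>(a, f). f(x := a)) (pair_pmf (bernoulli_pmf p) ?Q))"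
    by (subst E, subst Pi_pmf_insert) auto
  also have "\<dots> = map_pmf (\<lambda>(a, f). (id a, f y)) (pair_pmf (bernoulli_pmf p) ?Q)"
    unfolding pmf.map_comp o_def using assms(3) by (intro pmf.map_cong) auto
  also have "\<dots> = pair_pmf (map_pmf id (bernoulli_pmf p)) (map_pmf (\<lambda>f. f y) ?Q)"
    by (rule map_pair)
  also have "map_pmf (\<lambda>f. f y) ?Q = bernoulli_pmf p"
    using assms by (subst Pi_pmf_component) auto
  finally show ?thesis
    by simp
qed

lemma expectation_config_member:
  fixes g :: "bool \<Rightarrow> real"
  assumes "x \<in> edges t" "0 \<le> p" "p \<le> 1"
  shows "measure_pmf.expectation (config t p) (\<lambda>A. g (x \<in> A)) = p * g True + (1-p) * g False"
proof -
  have "measure_pmf.expectation (config t p) (\<lambda>A. g (x \<in> A))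
      = measure_pmf.expectation (map_pmf (\<lambda>A. x \<in> A) (config t p)) g"
    by simp
  then show ?thesis
    unfolding map_config_member[OF assms(1)] using assms(2,3) by simp
qed

lemma expectation_config_members:
  fixes g :: "bool \<Rightarrow> bool \<Rightarrow> real"
  assumes "x \<in> edges t" "y \<in> edges t" "x \<noteq> y" "0 \<le> p" "p \<le> 1"
  shows "measure_pmf.expectation (config t p) (\<lambda>A. g (x \<in> A) (y \<in> A)) =
     p*p * g True True + p*(1-p) * g True False + (1-p)*p * g False True + (1-p)*(1-p) * g False False"
proof -
  have U: "(UNIV :: (bool \<times> bool) set) = {(True, True), (True, False), (False, True), (False, False)}"
    by auto
  have "measure_pmf.expectation (config t p) (\<lambda>A. g (x \<in> A) (y \<in> A))
      = measure_pmf.expectation (pair_pmf (bernoulli_pmf p) (bernoulli_pmf p)) (case_prod g)"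
    unfolding map_config_members[OF assms(1-3), symmetric] by simp
  also have "\<dots> = (\<Sum>a\<in>UNIV. pmf (pair_pmf (bernoulli_pmf p) (bernoulli_pmf p)) a * case_prod g a)"
    by (subst integral_measure_pmf[of UNIV]) auto
  finally show ?thesis
    using assms(4,5) by (simp add: U pmf_pair)
qed

section \<open>States of a depth-first search\<close>

definition dfs_state :: "btree \<Rightarrow> bool list \<Rightarrow> bool list set \<Rightarrow> bool" where
  "dfs_state t v S \<longleftrightarrow> v \<in> verts t \<and> S \<subseteq> edges t
     \<and> (\<forall>y. y \<noteq> [] \<and> prefix y v \<longrightarrow> y \<in> S)
     \<and> (\<forall>x\<in>S. \<forall>y. y \<noteq> [] \<and> prefix y x \<longrightarrow> y \<in> S)
     \<and> (\<forall>x\<in>S. \<not> prefix x v \<longrightarrow> (\<forall>y\<in>edges t. prefix x y \<longrightarrow> y \<in> S))"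

lemma dfs_stateD:
  assumes "dfs_state t v S"
  shows "v \<in> verts t" "S \<subseteq> edges t" "\<And>y. y \<noteq> [] \<Longrightarrow> prefix y v \<Longrightarrow> y \<in> S"
    "\<And>x y. x \<in> S \<Longrightarrow> y \<noteq> [] \<Longrightarrow> prefix y x \<Longrightarrow> y \<in> S"
    "\<And>x y. x \<in> S \<Longrightarrow> \<not> prefix x v \<Longrightarrow> y \<in> edges t \<Longrightarrow> prefix x y \<Longrightarrow> y \<in> S"
  using assms unfolding dfs_state_def by blast+

lemma dfs_stateI:
  assumes "v \<in> verts t" "S \<subseteq> edges t" "\<And>y. y \<noteq> [] \<Longrightarrow> prefix y v \<Longrightarrow> y \<in> S"
    "\<And>x y. x \<in> S \<Longrightarrow> y \<noteq> [] \<Longrightarrow> prefix y x \<Longrightarrow> y \<in> S"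
    "\<And>x y. x \<in> S \<Longrightarrow> \<not> prefix x v \<Longrightarrow> y \<in> edges t \<Longrightarrow> prefix x y \<Longrightarrow> y \<in> S"
  shows "dfs_state t v S"
  using assms unfolding dfs_state_def by blast

lemma dfs_state_Nil: "dfs_state t [] {}"
  by (rule dfs_stateI) auto

lemma dfs_state_current_traversed: "dfs_state t v S \<Longrightarrow> v \<noteq> [] \<Longrightarrow> v \<in> S"
  using dfs_stateD(3) by blast

lemma dfs_state_untraversed_below:
  "dfs_state t v S \<Longrightarrow> x \<notin> S \<Longrightarrow> x \<noteq> [] \<Longrightarrow> prefix x y \<Longrightarrow> y \<notin> S"
  using dfs_stateD(4) by blast

lemma dfs_state_down:
  assumes S: "dfs_state t v S" and c: "c = v @ [b]" "c \<in> verts t" "c \<notin> S"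
  shows "dfs_state t c (insert c S)"
proof -
  note D = dfs_stateD[OF S]
  have path: "y = c \<or> prefix y v" if "prefix y c" for y
    using that c(1) by simp
  show ?thesis
  proof (rule dfs_stateI)
    show "c \<in> verts t"
      by fact
    show "insert c S \<subseteq> edges t"
      using D(2) c(1,2) unfolding edges_def by blast
  next
    fix y
    assume "y \<noteq> []" "prefix y c"
    then show "y \<in> insert c S"
      using path D(3) by blast
  next
    fix x y
    assume "x \<in> insert c S" "y \<noteq> []" "prefix y x"
    then show "y \<in> insert c S"
      using path D(3,4) by blast
  next
    fix x y
    assume x: "x \<in> insert c S" "\<not> prefix x c" and y: "y \<in> edges t" "prefix x y"
    have "x \<in> S" "\<not> prefix x v"
      using x c(1) by auto
    then show "y \<in> insert c S"
      using y D(5) by blast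
  qed
qed

lemma dfs_state_up:
  assumes S: "dfs_state t v S" and v: "v \<noteq> []"
    and finished: "\<And>b. v @ [b] \<in> verts t \<Longrightarrow> v @ [b] \<in> S"
  shows "dfs_state t (butlast v) S"
proof -
  note D = dfs_stateD[OF S]
  define u where "u = butlast v"
  have vu: "v = u @ [last v]"
    using v unfolding u_def by simp
  show ?thesis
    unfolding u_def[symmetric]
  proof (rule dfs_stateI)
    show "u \<in> verts t"
      using D(1) vu prefix_in_verts by metis
    show "S \<subseteq> edges t"
      by (rule D(2))
  next
    fix y
    assume "y \<noteq> []" "prefix y u"
    then show "y \<in> S"
      using D(3) vu by (metis prefix_snoc)
  next
    fix x y
    assume "x \<in> S" "y \<noteq> []" "prefix y x"
    then show "y \<in> S"
      using D(4) by blast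
  next
    fix x y
    assume x: "x \<in> S" "\<not> prefix x u" and y: "y \<in> edges t" "prefix x y"
    show "y \<in> S"
    proof (cases "prefix x v")
      case False
      then show ?thesis
        using x y D(5) by blast
    next
      case True
      then have "x = v"
        using x(2) vu by (metis prefix_snoc)
      show ?thesis
      proof (cases "y = v")
        case True
        then show ?thesis
          using dfs_state_current_traversed[OF S v] by simp
      next
        case False
        then obtain b w where yw: "y = v @ b # w"
          using y(2) \<open>x = v\<close> by (metis prefix_def append_Nil2 list.exhaust)
        then have "v @ [b] \<in> verts t"
          using y(1) prefix_in_verts[of "v @ [b]" w t] unfolding edges_def by simp
        then show ?thesis
          using finished y yw D(5)[of "v @ [b]" y] by (simp add: prefix_def)
      qed
    qed
  qed
qed

lemma dfs_state_step:
  assumes S: "dfs_state t v S" and x: "x \<in> set_pmf (sigma_state t p v S A)"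
  shows "dfs_state t (move t A v x) (S \<union> crossed v (move t A v x))"
  using set_pmf_sigma_state[OF x]
proof (elim disjE conjE)
  assume "x = v @ [False]" "v @ [False] \<in> verts t" "v @ [False] \<notin> S" "v @ [False] \<in> A"
  then show ?thesis
    using dfs_state_down[OF S refl] by (simp add: move_snoc)
next
  assume "x = v @ [True]" "v @ [True] \<in> verts t" "v @ [True] \<notin> S" "v @ [True] \<in> A"
  then show ?thesis
    using dfs_state_down[OF S refl] by (simp add: move_snoc)
next
  assume "x = v"
  then show ?thesis
    using S by simp
next
  assume up: "x = butlast v" "\<not> (v @ [False] \<in> verts t \<and> v @ [False] \<notin> S)"
    "\<not> (v @ [True] \<in> verts t \<and> v @ [True] \<notin> S)" "v \<noteq> []" "v \<in> A"
  have "v @ [b] \<in> S" if "v @ [b] \<in> verts t" for b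
    using that up(2,3) by (cases b) auto
  moreover have "S \<union> crossed v (butlast v) = S"
    using dfs_state_current_traversed[OF S up(4)] by (auto simp: crossed_butlast[OF up(4)])
  ultimately show ?thesis
    using dfs_state_up[OF S up(4)] up(1,4,5) by (simp add: move_butlast)
qed

lemma dfs_state_hist_pmf:
  "h \<in> set_pmf (hist_pmf t p (sigma_alpha t p) n) \<Longrightarrow> dfs_state t (pos h) (traversed h)"
proof (induction n arbitrary: h)
  case 0
  then show ?case
    using dfs_state_Nil by simp
next
  case (Suc n)
  then obtain h0 A x where h0: "h0 \<in> set_pmf (hist_pmf t p (sigma_alpha t p) n)"
    and x: "x \<in> set_pmf (sigma_alpha t p h0 A)" and h: "h = h0 @ [(A, move t A (pos h0) x)]"
    by auto
  show ?case
    unfolding h pos_snoc snd_conv traversed_snoc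
    using dfs_state_step[OF Suc.IH[OF h0] x[unfolded sigma_alpha_eq_sigma_state]] .
qed

section \<open>One stage of the search\<close>

definition expected_next ::
    "btree \<Rightarrow> real \<Rightarrow> (bool list \<Rightarrow> bool list set \<Rightarrow> real) \<Rightarrow> bool list \<Rightarrow> bool list set \<Rightarrow> real" where
  "expected_next t p f v S = measure_pmf.expectation (config t p) (\<lambda>A.
     measure_pmf.expectation (sigma_state t p v S A) (\<lambda>x. f (move t A v x) (S \<union> crossed v (move t A v x))))"

lemma expectation_sigma_state:
  fixes f :: "bool list \<Rightarrow> bool list set \<Rightarrow> real"
  assumes S: "dfs_state t v S"
  defines "c0 \<equiv> v @ [False]" and "c1 \<equiv> v @ [True]"
  defines "u0 \<equiv> c0 \<in> verts t \<and> c0 \<notin> S" and "u1 \<equiv> c1 \<in> verts t \<and> c1 \<notin> S"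
  shows "measure_pmf.expectation (sigma_state t p v S A) (\<lambda>x. f (move t A v x) (S \<union> crossed v (move t A v x))) =
    (if u0 \<and> u1 \<and> c0 \<in> A \<and> c1 \<in> A then
       alpha_at t p v * f c0 (insert c0 S) + (1 - alpha_at t p v) * f c1 (insert c1 S)
     else if u0 \<and> c0 \<in> A then f c0 (insert c0 S)
     else if u1 \<and> c1 \<in> A then f c1 (insert c1 S)
     else if u0 \<or> u1 then f v S
     else if v \<noteq> [] \<and> v \<in> A then f (butlast v) S
     else f v S)"
proof -
  define g where "g x = f (move t A v x) (S \<union> crossed v (move t A v x))" for x
  have "g c0 = f c0 (insert c0 S)" if "u0" "c0 \<in> A"
    using that unfolding g_def u0_def c0_def by (simp add: move_snoc)
  moreover have "g c1 = f c1 (insert c1 S)" if "u1" "c1 \<in> A"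
    using that unfolding g_def u1_def c1_def by (simp add: move_snoc)
  moreover have "g v = f v S"
    unfolding g_def by simp
  moreover have "g (butlast v) = f (butlast v) S" if "v \<noteq> []" "v \<in> A"
    using that dfs_state_current_traversed[OF S that(1)]
    unfolding g_def by (simp add: move_butlast crossed_butlast insert_absorb)
  ultimately show ?thesis
    using alpha_at_range[of t p v]
    unfolding sigma_state_def Let_def c0_def[symmetric] c1_def[symmetric] u0_def[symmetric] u1_def[symmetric]
      g_def[symmetric]
    by (auto simp: mult.commute)
qed

lemma expected_next_eq:
  fixes f :: "bool list \<Rightarrow> bool list set \<Rightarrow> real"
  assumes S: "dfs_state t v S" and p: "0 \<le> p" "p \<le> 1"
  defines "c0 \<equiv> v @ [False]" and "c1 \<equiv> v @ [True]"
  defines "u0 \<equiv> c0 \<in> verts t \<and> c0 \<notin> S" and "u1 \<equiv> c1 \<in> verts t \<and> c1 \<notin> S"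
    and "al \<equiv> alpha_at t p v"
  shows expected_next_both: "u0 \<Longrightarrow> u1 \<Longrightarrow> expected_next t p f v S =
        p*p * (al * f c0 (insert c0 S) + (1-al) * f c1 (insert c1 S))
        + p*(1-p) * f c0 (insert c0 S) + (1-p)*p * f c1 (insert c1 S) + (1-p)*(1-p) * f v S"
    and expected_next_left: "u0 \<Longrightarrow> \<not> u1 \<Longrightarrow> expected_next t p f v S = p * f c0 (insert c0 S) + (1-p) * f v S"
    and expected_next_right: "\<not> u0 \<Longrightarrow> u1 \<Longrightarrow> expected_next t p f v S = p * f c1 (insert c1 S) + (1-p) * f v S"
    and expected_next_up: "\<not> u0 \<Longrightarrow> \<not> u1 \<Longrightarrow> v \<noteq> [] \<Longrightarrow> expected_next t p f v S = p * f (butlast v) S + (1-p) * f v S"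
proof -
  have edge0: "c0 \<in> edges t" if "u0"
    using that unfolding u0_def c0_def edges_def by simp
  have edge1: "c1 \<in> edges t" if "u1"
    using that unfolding u1_def c1_def edges_def by simp
  have edge: "v \<in> edges t" if "v \<noteq> []"
    using that dfs_stateD(1)[OF S] unfolding edges_def by simp
  have c0_neq_c1: "c0 \<noteq> c1"
    unfolding c0_def c1_def by simp
  note inner = expectation_sigma_state[OF S, where f=f and p=p, folded c0_def c1_def, folded u0_def u1_def al_def]
  show "expected_next t p f v S =
        p*p * (al * f c0 (insert c0 S) + (1-al) * f c1 (insert c1 S))
        + p*(1-p) * f c0 (insert c0 S) + (1-p)*p * f c1 (insert c1 S) + (1-p)*(1-p) * f v S"
    if "u0" "u1"
    using that expectation_config_members[OF edge0 edge1 c0_neq_c1 p, of "\<lambda>a b. if a \<and> b then al * f c0 (insert c0 S) + (1-al) * f c1 (insert c1 S)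
        else if a then f c0 (insert c0 S) else if b then f c1 (insert c1 S) else f v S"]
    unfolding expected_next_def inner by (simp cong: if_cong)
  show "expected_next t p f v S = p * f c0 (insert c0 S) + (1-p) * f v S" if "u0" "\<not> u1"
    using that expectation_config_member[OF edge0 p, of "\<lambda>a. if a then f c0 (insert c0 S) else f v S"]
    unfolding expected_next_def inner by (simp cong: if_cong)
  show "expected_next t p f v S = p * f c1 (insert c1 S) + (1-p) * f v S" if "\<not> u0" "u1"
    using that expectation_config_member[OF edge1 p, of "\<lambda>a. if a then f c1 (insert c1 S) else f v S"]
    unfolding expected_next_def inner by (simp cong: if_cong)
  show "expected_next t p f v S = p * f (butlast v) S + (1-p) * f v S" if "\<not> u0" "\<not> u1" "v \<noteq> []"
    using that expectation_config_member[OF edge p, of "\<lambda>a. if a then f (butlast v) S else f v S"]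
    unfolding expected_next_def inner by (simp cong: if_cong)
qed

section \<open>The expected remaining time until a leaf edge is traversed\<close>

text \<open>The expected time for a depth-first search at v to traverse the untraversed subtrees
  below v and return to v.\<close>

definition finish_time :: "btree \<Rightarrow> real \<Rightarrow> bool list \<Rightarrow> bool list set \<Rightarrow> real" where
  "finish_time t p v S =
    (if v @ [False] \<in> verts t \<and> v @ [False] \<notin> S \<and> v @ [True] \<in> verts t \<and> v @ [True] \<notin> S
       then tauT p (sub t v)
     else if v @ [False] \<in> verts t \<and> v @ [False] \<notin> S then tauT p (sub t (v @ [False])) + 2/p
     else if v @ [True] \<in> verts t \<and> v @ [True] \<notin> S then tauT p (sub t (v @ [True])) + 2/p
     else 0)"

definition fresh_time :: "btree \<Rightarrow> real \<Rightarrow> bool list \<Rightarrow> real" where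
  "fresh_time t p x = tauT p (sub t x) / 2 + LamT p (sub t x)"

text \<open>On the path to e the current vertex v is still fresh, unless the child off the path is
  already finished and only the wait for the edge towards e remains; off the path, v finishes
  its subtree and waits for the edge back up. The index \<open>e ! length v\<close> is meaningless for
  \<open>v = e\<close>, a state excluded by \<open>e \<notin> S\<close>.\<close>

function time_to_go :: "btree \<Rightarrow> real \<Rightarrow> bool list \<Rightarrow> bool list \<Rightarrow> bool list set \<Rightarrow> real" where
  "time_to_go t p e v S =
    (if prefix v e then
       (if v @ [\<not> e ! length v] \<in> S then 1/p + fresh_time t p (v @ [e ! length v]) else fresh_time t p v)
     else finish_time t p v S + 1/p + time_to_go t p e (butlast v) S)"
  by auto
termination
proof (relation "Wellfounded.measure (\<lambda>(t, p, e, v, S). length v)")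
  fix t p e v S
  assume "\<not> prefix v e"
  then show "((t, p, e, butlast v, S), (t, p, e, v, S)) \<in> Wellfounded.measure (\<lambda>(t, p, e, v, S). length v)"
    by (cases v) auto
qed simp

declare time_to_go.simps [simp del]

definition potential :: "btree \<Rightarrow> real \<Rightarrow> bool list \<Rightarrow> bool list \<Rightarrow> bool list set \<Rightarrow> real" where
  "potential t p e v S = (if dfs_state t v S \<and> e \<notin> S then time_to_go t p e v S else 0)"

lemma finish_time_fresh:
  assumes "c \<in> verts t" "c @ [False] \<notin> S" "c @ [True] \<notin> S"
  shows "finish_time t p c S = tauT p (sub t c)"
  using assms snoc_in_verts_iff[OF assms(1)] sub_append[OF assms(1)]
  by (cases "sub t c") (auto simp: finish_time_def)

lemma finish_time_insert_other:
  "length c \<noteq> Suc (length u) \<Longrightarrow> finish_time t p u (insert c S) = finish_time t p u S"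
  unfolding finish_time_def by auto

lemma time_to_go_insert_deeper:
  "Suc (length u) < length c \<Longrightarrow> time_to_go t p e u (insert c S) = time_to_go t p e u S"
proof (induction u rule: length_induct)
  case (1 u)
  show ?case
  proof (cases "prefix u e")
    case True
    then show ?thesis
      using "1.prems" by (subst (1 2) time_to_go.simps) auto
  next
    case False
    then have "length (butlast u) < length u"
      by (cases u) auto
    then show ?thesis
      using False "1.IH" "1.prems" finish_time_insert_other[of c u t p S]
      by (subst (1 2) time_to_go.simps) auto
  qed
qed

lemma fresh_time_leaf_edge: "leaf_edge t e \<Longrightarrow> fresh_time t p e = 0"
  using leaf_edgeD(4) by (simp add: fresh_time_def)

lemma next_on_path:
  assumes S: "dfs_state t v S" and e: "e \<notin> S" "leaf_edge t e" and v: "prefix v e"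
  shows "prefix (v @ [e ! length v]) e" "v @ [e ! length v] \<in> verts t" "v @ [e ! length v] \<notin> S"
proof -
  have "v \<noteq> e"
    using dfs_state_current_traversed[OF S] leaf_edgeD(2)[OF e(2)] e(1) by blast
  then obtain b w where w: "e = v @ b # w"
    using v by (metis prefix_def append_Nil2 list.exhaust)
  then show path: "prefix (v @ [e ! length v]) e"
    by simp
  show "v @ [e ! length v] \<in> verts t"
    using leaf_edgeD(3)[OF e(2)] w prefix_in_verts[of "v @ [b]" w t] by simp
  show "v @ [e ! length v] \<notin> S"
    using dfs_stateD(5)[OF S _ _ leaf_edgeD(1)[OF e(2)] path] e(1) by (auto simp: prefix_def)
qed

lemma potential_path_child:
  assumes S: "dfs_state t v S" and e: "e \<notin> S" "leaf_edge t e"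
    and c: "c = v @ [b]" "c \<in> verts t" "c \<notin> S" "prefix c e"
  shows "potential t p e c (insert c S) = fresh_time t p c"
proof (cases "c = e")
  case True
  then show ?thesis
    using fresh_time_leaf_edge[OF e(2)] by (simp add: potential_def)
next
  case False
  have "c @ [\<not> e ! length c] \<notin> S"
    using dfs_state_untraversed_below[OF S c(3)] c(1) by (simp add: prefix_def)
  then show ?thesis
    using dfs_state_down[OF S c(1-3)] e(1) False c(4) unfolding potential_def
    by (subst time_to_go.simps) simp
qed

lemma potential_off_child:
  assumes S: "dfs_state t v S" and e: "e \<notin> S"
    and c: "c = v @ [b]" "c \<in> verts t" "c \<notin> S" "\<not> prefix c e"
  shows "potential t p e c (insert c S) = tauT p (sub t c) + 1/p + time_to_go t p e v (insert c S)"
proof -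
  have "c @ [b'] \<notin> insert c S" for b'
    using dfs_state_untraversed_below[OF S c(3)] c(1) by (simp add: prefix_def)
  then have "finish_time t p c (insert c S) = tauT p (sub t c)"
    using finish_time_fresh[OF c(2)] by blast
  moreover have "e \<notin> insert c S"
    using e c(4) by auto
  ultimately show ?thesis
    using dfs_state_down[OF S c(1-3)] c(1,4) unfolding potential_def
    by (subst time_to_go.simps) simp
qed

section \<open>Drift of the remaining time\<close>

lemma potential_off_path_child:
  assumes S: "dfs_state t v S" and e: "e \<notin> S" "\<not> prefix v e"
    and c: "v @ [b] \<in> verts t" "v @ [b] \<notin> S"
  shows "potential t p e (v @ [b]) (insert (v @ [b]) S)
      = tauT p (sub t (v @ [b])) + 2/p + finish_time t p v (insert (v @ [b]) S) + time_to_go t p e (butlast v) S"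
proof -
  have "v \<noteq> []"
    using e(2) by auto
  have "\<not> prefix (v @ [b]) e"
    using e(2) prefix_order.trans[of v "v @ [b]" e] by auto
  moreover have "time_to_go t p e v (insert (v @ [b]) S)
      = finish_time t p v (insert (v @ [b]) S) + 1/p + time_to_go t p e (butlast v) S"
    using e(2) \<open>v \<noteq> []\<close> time_to_go_insert_deeper[of "butlast v" "v @ [b]"]
    by (subst time_to_go.simps) simp
  ultimately show ?thesis
    using potential_off_child[OF S e(1) refl c] by simp
qed

lemma wait_identity:
  fixes r X :: real
  assumes "r \<noteq> 0"
  shows "r * X + (1-r) * (X + 1/r) = (X + 1/r) - 1"
  using assms by (simp add: field_simps)

lemma fork_identity:
  fixes p q t c G Gc :: real
  assumes "q = p * (2-p)" "q \<noteq> 0" "G = Gc + t * c + 1/q"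
  shows "Gc * (p*p + 2*p*(1-p)) + t * (q * c) + (1-p)*(1-p) * G = G - 1"
proof -
  have "p*p + 2*p*(1-p) = q" "(1-p)*(1-p) = 1 - q"
    unfolding assms(1) by (simp_all add: algebra_simps)
  then show ?thesis
    using assms(2,3) by (simp add: field_simps)
qed

lemma drift_off_path:
  assumes S: "dfs_state t v S" and e: "e \<notin> S" "\<not> prefix v e" and p: "0 < p" "p \<le> 1"
  shows "expected_next t p (potential t p e) v S = time_to_go t p e v S - 1"
proof -
  have "v \<noteq> []"
    using e(2) by auto
  define K0 where "K0 = time_to_go t p e (butlast v) S"
  have K: "time_to_go t p e v S = finish_time t p v S + 1/p + K0"
    using e(2) unfolding K0_def by (subst time_to_go.simps) simp
  note child = potential_off_path_child[OF S e, where p = p, folded K0_def]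
  have here: "potential t p e v S = time_to_go t p e v S"
    using S e(1) by (simp add: potential_def)
  note step = expected_next_eq[OF S, of p "potential t p e"]
  consider (both) "v @ [False] \<in> verts t \<and> v @ [False] \<notin> S" "v @ [True] \<in> verts t \<and> v @ [True] \<notin> S"
    | (left) "v @ [False] \<in> verts t \<and> v @ [False] \<notin> S" "\<not> (v @ [True] \<in> verts t \<and> v @ [True] \<notin> S)"
    | (right) "\<not> (v @ [False] \<in> verts t \<and> v @ [False] \<notin> S)" "v @ [True] \<in> verts t \<and> v @ [True] \<notin> S"
    | (up) "\<not> (v @ [False] \<in> verts t \<and> v @ [False] \<notin> S)" "\<not> (v @ [True] \<in> verts t \<and> v @ [True] \<notin> S)"
    by blast
  then show ?thesis
  proof cases
    case both
    obtain l r where v: "sub t v = Node2 l r"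
      using both snoc_in_verts_iff[OF dfs_stateD(1)[OF S], of True] by (cases "sub t v") auto
    define q where "q = 1 - (1-p)^2"
    define X where "X = tauT p l + tauT p r + 4/p + K0"
    have "q \<noteq> 0"
      using one_minus_sq_pos[OF p] unfolding q_def by simp
    have "sub t (v @ [False]) = l" "sub t (v @ [True]) = r"
      using sub_append[OF dfs_stateD(1)[OF S]] v by auto
    then have "potential t p e (v @ [b]) (insert (v @ [b]) S) = X" for b
      using child[of b] both unfolding X_def finish_time_def by (cases b) auto
    moreover have "time_to_go t p e v S = X + 1/q"
      using both v unfolding K X_def q_def finish_time_def by simp
    moreover have "p*p + 2*p*(1-p) = q" "(1-p)*(1-p) = 1 - q"
      unfolding q_def by (simp_all add: power2_eq_square algebra_simps)
    ultimately show ?thesis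
      using step(1) both wait_identity[OF \<open>q \<noteq> 0\<close>, of X] p here by (simp add: algebra_simps)
  next
    case left
    define Y where "Y = tauT p (sub t (v @ [False])) + 2/p + K0"
    have "potential t p e (v @ [False]) (insert (v @ [False]) S) = Y"
      using child[of False] left unfolding Y_def finish_time_def by auto
    moreover have "time_to_go t p e v S = Y + 1/p"
      using left unfolding K Y_def finish_time_def by auto
    ultimately show ?thesis
      using step(2) left wait_identity[of p Y] p here by simp
  next
    case right
    define Y where "Y = tauT p (sub t (v @ [True])) + 2/p + K0"
    have "potential t p e (v @ [True]) (insert (v @ [True]) S) = Y"
      using child[of True] right unfolding Y_def finish_time_def by auto
    moreover have "time_to_go t p e v S = Y + 1/p"
      using right unfolding K Y_def finish_time_def by auto
    ultimately show ?thesis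
      using step(3) right wait_identity[of p Y] p here by simp
  next
    case up
    have "v @ [b] \<in> S" if "v @ [b] \<in> verts t" for b
      using that up by (cases b) auto
    then have "potential t p e (butlast v) S = K0"
      using dfs_state_up[OF S \<open>v \<noteq> []\<close>] e(1) unfolding potential_def K0_def by simp
    moreover have "time_to_go t p e v S = K0 + 1/p"
      using up unfolding K finish_time_def by auto
    ultimately show ?thesis
      using step(4) up \<open>v \<noteq> []\<close> wait_identity[of p K0] p here by simp
  qed
qed

lemma alpha_at_fork:
  assumes p: "p_threshold t \<le> p" "p \<le> 1" and v: "sub t v = Node2 l r"
  defines "q \<equiv> 1 - (1-p)^2" and "d \<equiv> (LamT p l - LamT p r) / ((tauT p l + 2/p) + (tauT p r + 2/p))"
  shows "p*p*(1 - alpha_at t p v) + p*(1-p) = q * (1/2 - d)"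
    and "p*p*alpha_at t p v + p*(1-p) = q * (1/2 + d)"
proof -
  have "0 < p"
    using p p_threshold_ge[of t] by linarith
  moreover have al: "alpha_at t p v = 1/2 + d * (q / p^2)"
    using alpha_at_unclipped[OF p v] unfolding d_def q_def .
  moreover have q: "q = p * (2-p)"
    unfolding q_def by (simp add: power2_eq_square algebra_simps)
  ultimately show "p*p*(1 - alpha_at t p v) + p*(1-p) = q * (1/2 - d)"
    and "p*p*alpha_at t p v + p*(1-p) = q * (1/2 + d)"
    unfolding al q by (simp_all add: field_simps power2_eq_square)
qed

lemma fresh_time_fork:
  assumes "v \<in> verts t" "0 < p" "p \<le> 1" "sub t v = Node2 l r"
  defines "q \<equiv> 1 - (1-p)^2" and "d \<equiv> (LamT p l - LamT p r) / ((tauT p l + 2/p) + (tauT p r + 2/p))"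
  shows "fresh_time t p v = fresh_time t p (v @ [False]) + (tauT p r + 2/p) * (1/2 - d) + 1/q"
    and "fresh_time t p v = fresh_time t p (v @ [True]) + (tauT p l + 2/p) * (1/2 + d) + 1/q"
  using half_tauT_plus_LamT_Node2[OF assms(2,3), of l r] sub_append[OF assms(1)] assms(4)
  unfolding fresh_time_def d_def q_def by simp_all

text \<open>The only place where the choice of \<open>\<alpha>\<close> matters: both children are fresh and both
  edges are active.\<close>

lemma drift_at_fork:
  assumes S: "dfs_state t v S" and e: "e \<notin> S" "leaf_edge t e" "prefix v e"
    and p: "p_threshold t \<le> p" "p \<le> 1"
    and v: "sub t v = Node2 l r" "v @ [False] \<notin> S" "v @ [True] \<notin> S"
  shows "expected_next t p (potential t p e) v S = fresh_time t p v - 1"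
proof -
  have "0 < p"
    using p p_threshold_ge[of t] by linarith
  define q where "q = 1 - (1-p)^2"
  define d where "d = (LamT p l - LamT p r) / ((tauT p l + 2/p) + (tauT p r + 2/p))"
  define al where "al = alpha_at t p v"
  have q: "q = p * (2-p)" "q \<noteq> 0"
    using one_minus_sq_pos[OF \<open>0 < p\<close> p(2)] unfolding q_def by (auto simp: power2_eq_square algebra_simps)
  note al = alpha_at_fork[OF p v(1), folded q_def d_def al_def]
  note G = fresh_time_fork[OF dfs_stateD(1)[OF S] \<open>0 < p\<close> p(2) v(1), folded q_def d_def]
  have children: "v @ [b] \<in> verts t" for b
    using snoc_in_verts_iff[OF dfs_stateD(1)[OF S]] v(1) by simp
  moreover have "sub t (v @ [False]) = l" "sub t (v @ [True]) = r"
    using sub_append[OF dfs_stateD(1)[OF S]] v(1) by auto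
  moreover define b where "b = e ! length v"
  moreover have "prefix (v @ [b]) e" "\<not> prefix (v @ [\<not> b]) e"
    using next_on_path(1)[OF S e] prefix_same_cases[of "v @ [b]" e "v @ [\<not> b]"]
    unfolding b_def by (auto simp: prefix_def)
  moreover have "time_to_go t p e v (insert (v @ [\<not> b]) S) = 1/p + fresh_time t p (v @ [b])"
    using e(3) unfolding b_def by (subst time_to_go.simps) simp
  ultimately have on: "potential t p e (v @ [b]) (insert (v @ [b]) S) = fresh_time t p (v @ [b])"
    and off: "potential t p e (v @ [\<not> b]) (insert (v @ [\<not> b]) S)
                = (tauT p (sub t (v @ [\<not> b])) + 2/p) + fresh_time t p (v @ [b])"
    using potential_path_child[OF S e(1,2) refl] potential_off_child[OF S e(1) refl] v(2,3)
    by (cases b; simp)+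
  have here: "potential t p e v S = fresh_time t p v"
    using S e v(2,3) unfolding potential_def by (subst time_to_go.simps) (cases b; simp add: b_def)
  note both = expected_next_both[OF S _ p(2), of "potential t p e", folded al_def]
  show ?thesis
  proof (cases b)
    case False
    let ?Gc = "fresh_time t p (v @ [False])" and ?t = "tauT p r + 2/p"
    have "expected_next t p (potential t p e) v S
        = p*p * (al * ?Gc + (1-al) * (?t + ?Gc)) + p*(1-p) * ?Gc + (1-p)*p * (?t + ?Gc)
          + (1-p)*(1-p) * fresh_time t p v"
      using both on off here False v(2,3) children \<open>0 < p\<close> \<open>sub t (v @ [True]) = r\<close> by simp
    also have "\<dots> = ?Gc * (p*p + 2*p*(1-p)) + ?t * (p*p*(1-al) + p*(1-p)) + (1-p)*(1-p) * fresh_time t p v"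
      using \<open>0 < p\<close> by (simp add: field_simps)
    also have "\<dots> = fresh_time t p v - 1"
      unfolding al(1) by (rule fork_identity[OF q G(1)])
    finally show ?thesis .
  next
    case True
    let ?Gc = "fresh_time t p (v @ [True])" and ?t = "tauT p l + 2/p"
    have "expected_next t p (potential t p e) v S
        = p*p * (al * (?t + ?Gc) + (1-al) * ?Gc) + p*(1-p) * (?t + ?Gc) + (1-p)*p * ?Gc
          + (1-p)*(1-p) * fresh_time t p v"
      using both on off here True v(2,3) children \<open>0 < p\<close> \<open>sub t (v @ [False]) = l\<close> by simp
    also have "\<dots> = ?Gc * (p*p + 2*p*(1-p)) + ?t * (p*p*al + p*(1-p)) + (1-p)*(1-p) * fresh_time t p v"
      using \<open>0 < p\<close> by (simp add: field_simps)
    also have "\<dots> = fresh_time t p v - 1"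
      unfolding al(2) by (rule fork_identity[OF q G(2)])
    finally show ?thesis .
  qed
qed

lemma drift_on_path:
  assumes S: "dfs_state t v S" and e: "e \<notin> S" "leaf_edge t e" "prefix v e"
    and p: "p_threshold t \<le> p" "p \<le> 1"
  shows "expected_next t p (potential t p e) v S = time_to_go t p e v S - 1"
proof -
  have "0 < p"
    using p p_threshold_ge[of t] by linarith
  define b where "b = e ! length v"
  have on: "v @ [b] \<in> verts t" "v @ [b] \<notin> S"
    and here: "potential t p e (v @ [b]) (insert (v @ [b]) S) = fresh_time t p (v @ [b])"
    using next_on_path[OF S e] potential_path_child[OF S e(1,2) refl] unfolding b_def by auto
  have K: "time_to_go t p e v S = (if v @ [\<not> b] \<in> S then 1/p + fresh_time t p (v @ [b]) else fresh_time t p v)"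
    using e(3) unfolding b_def by (subst time_to_go.simps) simp
  have potential: "potential t p e v S = time_to_go t p e v S"
    using S e(1) by (simp add: potential_def)
  note step = expected_next_eq[OF S less_imp_le[OF \<open>0 < p\<close>] p(2), of "potential t p e"]
  consider (finished) "v @ [\<not> b] \<in> S" | (single) "v @ [\<not> b] \<notin> verts t" | (fork) "v @ [\<not> b] \<notin> S" "v @ [\<not> b] \<in> verts t"
    by blast
  then show ?thesis
  proof cases
    case finished
    then show ?thesis
      using step(2,3) on here K potential wait_identity[of p "fresh_time t p (v @ [b])"] \<open>0 < p\<close>
      by (cases b) (simp_all add: algebra_simps)
  next
    case single
    obtain s where "sub t v = Node1 s" "\<not> b"
      using single on(1) snoc_in_verts_iff[OF dfs_stateD(1)[OF S], of b]
        snoc_in_verts_iff[OF dfs_stateD(1)[OF S], of "\<not> b"]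
      by (cases "sub t v") auto
    moreover have "fresh_time t p v = fresh_time t p (v @ [b]) + 1/p"
      using calculation sub_append[OF dfs_stateD(1)[OF S], of "[b]"] unfolding fresh_time_def by simp
    moreover have "v @ [\<not> b] \<notin> S"
      using single dfs_stateD(2)[OF S] unfolding edges_def by auto
    ultimately show ?thesis
      using step(2) on here K potential single \<open>\<not> b\<close> wait_identity[of p "fresh_time t p (v @ [b])"] \<open>0 < p\<close>
      by (simp add: algebra_simps)
  next
    case fork
    obtain l r where v: "sub t v = Node2 l r"
      using fork(2) on(1) snoc_in_verts_iff[OF dfs_stateD(1)[OF S], of b]
        snoc_in_verts_iff[OF dfs_stateD(1)[OF S], of "\<not> b"]
      by (cases "sub t v") auto
    have "v @ [False] \<notin> S" "v @ [True] \<notin> S"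
      using on(2) fork(1) by (cases b; simp)+
    with v have "expected_next t p (potential t p e) v S = fresh_time t p v - 1"
      by (rule drift_at_fork[OF S e p])
    then show ?thesis
      using K fork(1) by simp
  qed
qed

lemma potential_drift:
  assumes S: "dfs_state t v S" and e: "e \<notin> S" "leaf_edge t e"
    and p: "p_threshold t \<le> p" "p \<le> 1"
  shows "expected_next t p (potential t p e) v S = potential t p e v S - 1"
proof -
  have "0 < p"
    using p p_threshold_ge[of t] by linarith
  then show ?thesis
    using drift_on_path[OF S e _ p] drift_off_path[OF S e(1) _ \<open>0 < p\<close> p(2)] S e(1)
    by (cases "prefix v e") (simp_all add: potential_def)
qed

section \<open>Expected hitting times\<close>

lemma integrable_measure_pmf_bounded:
  fixes f :: "'a \<Rightarrow> real"
  assumes "\<And>x. \<bar>f x\<bar> \<le> B"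
  shows "integrable (measure_pmf M) f"
  by (rule measure_pmf.integrable_const_bound[where B = B]) (use assms in auto)

lemma expectation_bind_pmf_bounded:
  fixes f :: "'b \<Rightarrow> real"
  assumes "\<And>x. \<bar>f x\<bar> \<le> B"
  shows "measure_pmf.expectation (bind_pmf M N) f
       = measure_pmf.expectation M (\<lambda>x. measure_pmf.expectation (N x) f)"
  using measurable_measure_pmf[of N] assms unfolding measure_pmf_bind
  by (subst integral_bind[where K = "count_space UNIV" and B = B and B' = 1])
     (auto intro: prob_space.finite_measure simp: measure_pmf.emeasure_space_1 prob_space_measure_pmf)

lemma sums_of_telescoping:
  fixes D P :: "nat \<Rightarrow> real"
  assumes step: "\<And>n. D (Suc n) = D n - P n"
    and P: "\<And>n. 0 \<le> P n" "\<And>n. P n \<le> 1"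
    and D: "\<And>n. \<bar>D n\<bar> \<le> B * P n"
  shows "P sums D 0"
proof -
  have partial: "(\<Sum>k<n. P k) = D 0 - D n" for n
    by (induction n) (simp_all add: step)
  have bound: "B * P n \<le> \<bar>B\<bar>" for n
    using mult_right_mono[OF abs_ge_self[of B] P(1)[of n]] mult_left_mono[OF P(2)[of n] abs_ge_zero[of B]]
    by simp
  have "(\<Sum>k<n. P k) \<le> D 0 + \<bar>B\<bar>" for n
    using bound[of n] D[of n] abs_ge_minus_self[of "D n"] unfolding partial by linarith
  then have "summable P"
    by (rule summableI_nonneg_bounded[OF P(1)])
  then have "(\<lambda>n. B * P n) \<longlonglongrightarrow> 0"
    by (intro tendsto_mult_right_zero summable_LIMSEQ_zero)
  moreover have "\<forall>\<^sub>F n in sequentially. norm (D n) \<le> B * P n"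
    using D by simp
  ultimately have "D \<longlonglongrightarrow> 0"
    by (rule Lim_null_comparison[rotated])
  then have "(\<lambda>n. \<Sum>k<n. P k) \<longlonglongrightarrow> D 0 - 0"
    unfolding partial by (intro tendsto_diff tendsto_const)
  then show ?thesis
    unfolding sums_def by simp
qed

lemma potential_bounded: "\<exists>B. \<forall>v S. \<bar>potential t p e v S\<bar> \<le> B"
proof -
  define X where "X = insert 0 ((\<lambda>(v, S). \<bar>time_to_go t p e v S\<bar>) ` (verts t \<times> Pow (edges t)))"
  have "finite X"
    unfolding X_def by simp
  have "\<bar>potential t p e v S\<bar> \<in> X" for v S
    using dfs_stateD(1,2)[of t v S] unfolding X_def potential_def by force
  then show ?thesis
    using Max_ge[OF \<open>finite X\<close>] by blast
qed

lemma expectation_potential_step: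
  assumes S: "dfs_state t (pos h) (traversed h)" and e: "leaf_edge t e"
    and p: "p_threshold t \<le> p" "p \<le> 1"
  shows "measure_pmf.expectation
           (bind_pmf (config t p) (\<lambda>A. map_pmf (\<lambda>x. h @ [(A, move t A (pos h) x)]) (sigma_alpha t p h A)))
           (\<lambda>h. potential t p e (pos h) (traversed h))
       = potential t p e (pos h) (traversed h) - indicator {h. e \<notin> traversed h} h"
proof -
  obtain B where B: "\<And>v S. \<bar>potential t p e v S\<bar> \<le> B"
    using potential_bounded by blast
  have "measure_pmf.expectation
           (bind_pmf (config t p) (\<lambda>A. map_pmf (\<lambda>x. h @ [(A, move t A (pos h) x)]) (sigma_alpha t p h A)))
           (\<lambda>h. potential t p e (pos h) (traversed h))
      = expected_next t p (potential t p e) (pos h) (traversed h)"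
    unfolding expected_next_def
    by (subst expectation_bind_pmf_bounded[where B = B]) (simp_all add: B traversed_snoc sigma_alpha_eq_sigma_state)
  also have "\<dots> = potential t p e (pos h) (traversed h) - indicator {h. e \<notin> traversed h} h"
  proof (cases "e \<in> traversed h")
    case True
    then show ?thesis
      unfolding expected_next_def by (simp add: potential_def)
  next
    case False
    then show ?thesis
      using potential_drift[OF S False e p] by simp
  qed
  finally show ?thesis .
qed

definition mean_potential :: "btree \<Rightarrow> real \<Rightarrow> bool list \<Rightarrow> nat \<Rightarrow> real" where
  "mean_potential t p e n = measure_pmf.expectation (hist_pmf t p (sigma_alpha t p) n)
     (\<lambda>h. potential t p e (pos h) (traversed h))"

definition untraversed_prob :: "btree \<Rightarrow> real \<Rightarrow> bool list \<Rightarrow> nat \<Rightarrow> real" where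
  "untraversed_prob t p e n = measure_pmf.prob (hist_pmf t p (sigma_alpha t p) n) {h. e \<notin> traversed h}"

lemma mean_potential_Suc:
  assumes e: "leaf_edge t e" and p: "p_threshold t \<le> p" "p \<le> 1"
  shows "mean_potential t p e (Suc n) = mean_potential t p e n - untraversed_prob t p e n"
proof -
  let ?M = "hist_pmf t p (sigma_alpha t p) n" and ?F = "\<lambda>h. potential t p e (pos h) (traversed h)"
  obtain B where B: "\<And>v S. \<bar>potential t p e v S\<bar> \<le> B"
    using potential_bounded by blast
  have "mean_potential t p e (Suc n) = measure_pmf.expectation ?M (\<lambda>h. measure_pmf.expectation
      (bind_pmf (config t p) (\<lambda>A. map_pmf (\<lambda>x. h @ [(A, move t A (pos h) x)]) (sigma_alpha t p h A))) ?F)"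
    unfolding mean_potential_def hist_pmf.simps by (rule expectation_bind_pmf_bounded[where B = B]) (rule B)
  also have "\<dots> = measure_pmf.expectation ?M (\<lambda>h. ?F h - indicator {h. e \<notin> traversed h} h)"
    using expectation_potential_step[OF dfs_state_hist_pmf e p]
    by (intro integral_cong_AE) (auto intro!: AE_pmfI)
  also have "\<dots> = mean_potential t p e n - untraversed_prob t p e n"
    unfolding mean_potential_def untraversed_prob_def
    by (subst Bochner_Integration.integral_diff)
       (auto intro: integrable_measure_pmf_bounded[where B = B] integrable_measure_pmf_bounded[where B = 1] B)
  finally show ?thesis .
qed

lemma abs_mean_potential_le:
  assumes B: "\<And>v S. \<bar>potential t p e v S\<bar> \<le> B"
  shows "\<bar>mean_potential t p e n\<bar> \<le> B * untraversed_prob t p e n"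
proof -
  let ?M = "hist_pmf t p (sigma_alpha t p) n" and ?F = "\<lambda>h. potential t p e (pos h) (traversed h)"
  have "\<bar>mean_potential t p e n\<bar> \<le> measure_pmf.expectation ?M (\<lambda>h. \<bar>?F h\<bar>)"
    unfolding mean_potential_def by (rule integral_abs_bound)
  also have "\<dots> \<le> measure_pmf.expectation ?M (\<lambda>h. B * indicator {h. e \<notin> traversed h} h)"
  proof (rule integral_mono)
    show "integrable (measure_pmf ?M) (\<lambda>h. \<bar>?F h\<bar>)"
      by (rule integrable_measure_pmf_bounded[where B = B]) (simp add: B)
    show "integrable (measure_pmf ?M) (\<lambda>h. B * indicator {h. e \<notin> traversed h} h)"
      by (rule integrable_measure_pmf_bounded[where B = "\<bar>B\<bar>"]) (simp add: indicator_def)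
    show "\<bar>?F h\<bar> \<le> B * indicator {h. e \<notin> traversed h} h" for h
      using B[of "pos h" "traversed h"] B[of e "{}"] by (auto simp: potential_def)
  qed
  also have "\<dots> = B * untraversed_prob t p e n"
    unfolding untraversed_prob_def by simp
  finally show ?thesis .
qed

lemma mean_potential_0: "mean_potential t p e 0 = tauT p t / 2 + LamT p t"
  unfolding mean_potential_def potential_def
  by (subst time_to_go.simps) (simp add: dfs_state_Nil fresh_time_def)

lemma ET_leaf_edge:
  assumes e: "leaf_edge t e" and p: "p_threshold t \<le> p" "p \<le> 1"
  shows "ET t p (sigma_alpha t p) e = ennreal (tauT p t / 2 + LamT p t)"
proof -
  obtain B where B: "\<And>v S. \<bar>potential t p e v S\<bar> \<le> B"
    using potential_bounded by blast
  have "untraversed_prob t p e sums mean_potential t p e 0"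
    by (rule sums_of_telescoping[where B = B])
       (use mean_potential_Suc[OF e p] abs_mean_potential_le[OF B] in \<open>auto simp: untraversed_prob_def\<close>)
  then have "summable (untraversed_prob t p e)" "suminf (untraversed_prob t p e) = mean_potential t p e 0"
    by (simp_all add: sums_iff)
  moreover have "0 \<le> untraversed_prob t p e n" for n
    by (simp add: untraversed_prob_def)
  ultimately show ?thesis
    unfolding ET_def untraversed_prob_def[symmetric]
    by (simp add: suminf_ennreal2 mean_potential_0)
qed

lemma ET_prefix_le:
  assumes "e' \<noteq> []" "prefix e' e"
  shows "ET t p (sigma_alpha t p) e' \<le> ET t p (sigma_alpha t p) e"
  unfolding ET_def
proof (intro suminf_le ennreal_leI summableI)
  fix n
  let ?M = "hist_pmf t p (sigma_alpha t p) n"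
  have "AE h in measure_pmf ?M. h \<in> {h. e' \<notin> traversed h} \<longrightarrow> h \<in> {h. e \<notin> traversed h}"
    using dfs_stateD(4)[OF dfs_state_hist_pmf, of _ t p _ e e'] assms by (auto intro!: AE_pmfI)
  then show "measure_pmf.prob ?M {h. e' \<notin> traversed h} \<le> measure_pmf.prob ?M {h. e \<notin> traversed h}"
    by (intro measure_pmf.finite_measure_mono_AE) simp_all
qed

theorem mainTheorem8:
  fixes t :: btree
  shows "\<exists>p0::real. 0 < p0 \<and> p0 < 1 \<and>
    (\<forall>p. p0 \<le> p \<and> p \<le> 1 \<longrightarrow>
       (\<forall>e. leaf_edge t e \<longrightarrow>
          ET t p (sigma_alpha t p) e = ennreal (tauT p t / 2 + LamT p t))
     \<and> val t p \<le> ennreal (tauT p t / 2 + LamT p t))"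
proof (intro exI conjI allI impI)
  show "0 < p_threshold t" "p_threshold t < 1"
    using p_threshold_ge[of t] p_threshold_less_one[of t] by linarith+
  fix p
  assume p: "p_threshold t \<le> p \<and> p \<le> 1"
  then show leaf: "ET t p (sigma_alpha t p) e = ennreal (tauT p t / 2 + LamT p t)" if "leaf_edge t e" for e
    using ET_leaf_edge that by blast
  have "ET t p (sigma_alpha t p) e' \<le> ennreal (tauT p t / 2 + LamT p t)" if e': "e' \<in> edges t" for e'
  proof -
    obtain e where "leaf_edge t e" "prefix e' e"
      using ex_leaf_edge_extending[OF e'] by blast
    moreover have "e' \<noteq> []"
      using e' unfolding edges_def by simp
    ultimately show ?thesis
      using ET_prefix_le leaf by metis
  qed
  then have "(SUP e' \<in> edges t. ET t p (sigma_alpha t p) e') \<le> ennreal (tauT p t / 2 + LamT p t)"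
    by (rule SUP_least)
  moreover have "val t p \<le> (SUP e' \<in> edges t. ET t p (sigma_alpha t p) e')"
    unfolding val_def by (rule INF_lower) simp
  ultimately show "val t p \<le> ennreal (tauT p t / 2 + LamT p t)"
    by (rule order_trans[rotated])
qed

end
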